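(* Let $\mathcal{X}$ be a Hilbert $C^*$-module over a $C^*$-algebra $\mathcal{A}$, let $K\in\mathcal{L}(\mathcal{X})$ be a projection, and let $x,u,v\in\mathcal{X}$ with $u+v\in{\rm ran}(K)$. Then \[ [x,x]_{(I-K)}=|x|^2-\langle Kx,x\rangle\leq \tfrac14|v-u|^2-{\rm Re}\langle x-u,v-x\rangle. \] In particular, if ${\rm Re}\langle x-u,v-x\rangle\geq0$, then $|x|^2-\langle Kx,x\rangle\leq\tfrac14|v-u|^2$.
   Context: $\langle\cdot,\cdot\rangle$ is the $\mathcal{A}$-valued inner product, $\mathcal{A}$-linear in the second variable. For $z\in\mathcal{X}$, $|z|=\langle z,z\rangle^{1/2}\in\mathcal{A}$, so $|z|^2=\langle z,z\rangle$. $\mathcal{L}(\mathcal{X})$ is the $C^*$-algebra of adjointable maps on $\mathcal{X}$, with identity $I$. For positive $S\in\mathcal{L}(\mathcal{X})$, $[x,y]_S=\langle Sx,y\rangle$. For $a\in\mathcal{A}$, ${\rm Re}\,a=(a+a^* )/2$. *)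

theory Defs
  imports "HOL-Analysis.Analysis"
begin

definition cstar_algebra :: "(complex \<Rightarrow> 'a::{real_normed_algebra,banach} \<Rightarrow> 'a) \<Rightarrow> ('a \<Rightarrow> 'a) \<Rightarrow> bool" where
  "cstar_algebra sc star \<longleftrightarrow>
     (\<forall>c a b. sc c (a + b) = sc c a + sc c b) \<and>
     (\<forall>c d a. sc (c + d) a = sc c a + sc d a) \<and>
     (\<forall>c d a. sc c (sc d a) = sc (c * d) a) \<and>
     (\<forall>a. sc 1 a = a) \<and>
     (\<forall>r a. sc (complex_of_real r) a = scaleR r a) \<and>
     (\<forall>c a b. sc c (a * b) = sc c a * b \<and> sc c (a * b) = a * sc c b) \<and>
     (\<forall>c a. norm (sc c a) = cmod c * norm a) \<and>
     (\<forall>a. star (star a) = a) \<and>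
     (\<forall>a b. star (a + b) = star a + star b) \<and>
     (\<forall>c a. star (sc c a) = sc (cnj c) (star a)) \<and>
     (\<forall>a b. star (a * b) = star b * star a) \<and>
     (\<forall>a. norm (star a * a) = (norm a)\<^sup>2)"

text \<open>Positive elements (in a C*-algebra exactly the elements b* b) and the induced order.\<close>

definition cstar_pos :: "('a::{real_normed_algebra,banach} \<Rightarrow> 'a) \<Rightarrow> 'a \<Rightarrow> bool" where
  "cstar_pos star a \<longleftrightarrow> (\<exists>b. a = star b * b)"

definition cstar_le :: "('a::{real_normed_algebra,banach} \<Rightarrow> 'a) \<Rightarrow> 'a \<Rightarrow> 'a \<Rightarrow> bool" where
  "cstar_le star a b \<longleftrightarrow> cstar_pos star (b - a)"

definition cstar_Re :: "('a::{real_normed_algebra,banach} \<Rightarrow> 'a) \<Rightarrow> 'a \<Rightarrow> 'a" where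
  "cstar_Re star a = scaleR (1/2) (a + star a)"

definition hilbert_cstar_module ::
  "(complex \<Rightarrow> 'a::{real_normed_algebra,banach} \<Rightarrow> 'a) \<Rightarrow> ('a \<Rightarrow> 'a) \<Rightarrow>
   (complex \<Rightarrow> 'x::ab_group_add \<Rightarrow> 'x) \<Rightarrow> ('x \<Rightarrow> 'a \<Rightarrow> 'x) \<Rightarrow> ('x \<Rightarrow> 'x \<Rightarrow> 'a) \<Rightarrow> bool" where
  "hilbert_cstar_module sc star scX act ip \<longleftrightarrow>
     cstar_algebra sc star \<and>
     (\<forall>c x y. scX c (x + y) = scX c x + scX c y) \<and>
     (\<forall>c d x. scX (c + d) x = scX c x + scX d x) \<and>
     (\<forall>c d x. scX c (scX d x) = scX (c * d) x) \<and>
     (\<forall>x. scX 1 x = x) \<and>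
     (\<forall>x y a. act (x + y) a = act x a + act y a) \<and>
     (\<forall>x a b. act x (a + b) = act x a + act x b) \<and>
     (\<forall>x a b. act (act x a) b = act x (a * b)) \<and>
     (\<forall>c x a. scX c (act x a) = act (scX c x) a \<and> scX c (act x a) = act x (sc c a)) \<and>
     (\<forall>x y z. ip x (y + z) = ip x y + ip x z) \<and>
     (\<forall>c x y. ip x (scX c y) = sc c (ip x y)) \<and>
     (\<forall>x y a. ip x (act y a) = ip x y * a) \<and>
     (\<forall>x y. ip y x = star (ip x y)) \<and>
     (\<forall>x. cstar_pos star (ip x x)) \<and>
     (\<forall>x. ip x x = 0 \<longrightarrow> x = 0) \<and>
     (\<forall>f :: nat \<Rightarrow> 'x.
        (\<forall>e>0. \<exists>N. \<forall>m\<ge>N. \<forall>n\<ge>N. sqrt (norm (ip (f m - f n) (f m - f n))) < e) \<longrightarrow>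
        (\<exists>l. \<forall>e>0. \<exists>N. \<forall>n\<ge>N. sqrt (norm (ip (f n - l) (f n - l))) < e))"

definition adjointable :: "('x \<Rightarrow> 'x \<Rightarrow> 'a) \<Rightarrow> ('x \<Rightarrow> 'x) \<Rightarrow> bool" where
  "adjointable ip T \<longleftrightarrow> (\<exists>S. \<forall>x y. ip (T x) y = ip x (S y))"

definition module_projection :: "('x \<Rightarrow> 'x \<Rightarrow> 'a) \<Rightarrow> ('x \<Rightarrow> 'x) \<Rightarrow> bool" where
  "module_projection ip K \<longleftrightarrow>
     adjointable ip K \<and> (\<forall>x y. ip (K x) y = ip x (K y)) \<and> (\<forall>x. K (K x) = K x)"

definition semi_inner :: "('x \<Rightarrow> 'x \<Rightarrow> 'a) \<Rightarrow> ('x \<Rightarrow> 'x) \<Rightarrow> 'x \<Rightarrow> 'x \<Rightarrow> 'a" where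
  "semi_inner ip S x y = ip (S x) y"

end

theory Submission
  imports Defs
begin

text \<open>
  Put \<open>y = 2 K x - (u + v)\<close>. Because \<open>u + v\<close> lies in the range of the self-adjoint
  idempotent \<open>K\<close>, expanding \<open>\<langle>y, y\<rangle>\<close> gives
  \<open>1/4 |v - u|\<^sup>2 - Re \<langle>x - u, v - x\<rangle> - (|x|\<^sup>2 - \<langle>K x, x\<rangle>) = 1/4 \<langle>y, y\<rangle>\<close>,
  and the right-hand side is positive. The second one adds the positive element
  \<open>Re \<langle>x - u, v - x\<rangle>\<close>, so it needs that the elements \<open>b\<^sup>* b\<close> of a C*-algebra
  form a convex cone. As the algebra need not be unital, this is derived from the axioms:
  positivity is characterised by \<open>\<parallel>t - h\<parallel> \<le> t\<close>, square roots come from the binomial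
  series of \<open>\<surd>(1 - s)\<close>, and \<open>x\<^sup>* x\<close> is shown positive by the Fukamiya-Kaplansky argument:
  if \<open>-c\<^sup>* c\<close> is positive then \<open>c = 0\<close>, applied to \<open>c = x k\<close> with \<open>k\<close> twice the
  negative part of \<open>x\<^sup>* x\<close>.
\<close>

section \<open>The binomial series of the square root\<close>

text \<open>Taylor coefficients of \<open>\<surd>(1 - t)\<close> and of \<open>1 - \<surd>(1 - t)\<close>; the convolution identity
  for the latter is \<open>(1 - \<surd>(1 - t))\<^sup>2 = 2 (1 - \<surd>(1 - t)) - t\<close>.\<close>

definition sqrt_one_minus_coeff :: "nat \<Rightarrow> real" where
  "sqrt_one_minus_coeff n = ((1/2) gchoose n) * (-1)^n"

definition one_minus_sqrt_coeff :: "nat \<Rightarrow> real" where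
  "one_minus_sqrt_coeff n = (if n = 0 then 0 else - sqrt_one_minus_coeff n)"

lemma sqrt_one_minus_coeff_0 [simp]: "sqrt_one_minus_coeff 0 = 1"
  by (simp add: sqrt_one_minus_coeff_def)

lemma sqrt_one_minus_coeff_Suc:
  "sqrt_one_minus_coeff (Suc k) = sqrt_one_minus_coeff k * (2 * real k - 1) / (2 * real k + 2)"
proof -
  have "(1/2::real) * ((1/2) gchoose k) = real k * ((1/2) gchoose k) + real (Suc k) * ((1/2) gchoose (Suc k))"
    by (rule gbinomial_mult_1)
  then have Suc_k: "((1/2::real) gchoose (Suc k)) = (1 - 2 * real k) * ((1/2) gchoose k) / (2 * real k + 2)"
    by (simp add: field_simps)
  show ?thesis
    unfolding sqrt_one_minus_coeff_def power_Suc Suc_k by (simp add: field_simps)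
qed

lemma sqrt_one_minus_coeff_convolution:
  "(\<Sum>i\<le>n. sqrt_one_minus_coeff i * sqrt_one_minus_coeff (n - i)) = (if n = 0 then 1 else if n = 1 then -1 else 0)"
proof -
  have "(\<Sum>i\<le>n. sqrt_one_minus_coeff i * sqrt_one_minus_coeff (n - i))
      = (\<Sum>k=0..n. ((1/2::real) gchoose k) * ((1/2) gchoose (n - k))) * (-1)^n"
    unfolding sqrt_one_minus_coeff_def sum_distrib_right atLeast0AtMost
    by (rule sum.cong) (auto simp: power_add[symmetric])
  also have "\<dots> = ((1/2 + 1/2::real) gchoose n) * (-1)^n"
    by (simp only: gbinomial_Vandermonde)
  also have "\<dots> = real (1 choose n) * (-1)^n"
    by (simp add: binomial_gbinomial)
  also have "\<dots> = (if n = 0 then 1 else if n = 1 then -1 else 0)"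
    by (cases n) (auto simp: binomial_eq_0)
  finally show ?thesis .
qed

lemma one_minus_sqrt_coeff_0 [simp]: "one_minus_sqrt_coeff 0 = 0"
  by (simp add: one_minus_sqrt_coeff_def)

lemma one_minus_sqrt_coeff_1 [simp]: "one_minus_sqrt_coeff (Suc 0) = 1/2"
  by (simp add: one_minus_sqrt_coeff_def sqrt_one_minus_coeff_def)

lemma one_minus_sqrt_coeff_Suc_Suc:
  "one_minus_sqrt_coeff (Suc (Suc k)) = one_minus_sqrt_coeff (Suc k) * (2 * real k + 1) / (2 * real k + 4)"
  using sqrt_one_minus_coeff_Suc[of "Suc k"] by (simp add: one_minus_sqrt_coeff_def field_simps)

lemma one_minus_sqrt_coeff_nonneg: "0 \<le> one_minus_sqrt_coeff n"
proof (induction n)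
  case (Suc n)
  then show ?case
    by (cases n) (simp_all add: one_minus_sqrt_coeff_Suc_Suc)
qed simp

lemma sum_one_minus_sqrt_coeff:
  "(\<Sum>n\<le>N. one_minus_sqrt_coeff n) = 1 - (2 * real N + 2) * one_minus_sqrt_coeff (Suc N)"
proof (induction N)
  case (Suc N)
  have "(\<Sum>n\<le>Suc N. one_minus_sqrt_coeff n)
      = 1 - (2 * real N + 2) * one_minus_sqrt_coeff (Suc N) + one_minus_sqrt_coeff (Suc N)"
    using Suc.IH by simp
  also have "\<dots> = 1 - (2 * real (Suc N) + 2) * one_minus_sqrt_coeff (Suc (Suc N))"
    by (simp add: one_minus_sqrt_coeff_Suc_Suc field_simps)
  finally show ?case .
qed simp

lemma summable_one_minus_sqrt_coeff: "summable one_minus_sqrt_coeff"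
proof (rule summableI_nonneg_bounded)
  show "(\<Sum>n<N. one_minus_sqrt_coeff n) \<le> 1" for N
    using sum_one_minus_sqrt_coeff[of "N - 1"] one_minus_sqrt_coeff_nonneg[of N]
    by (cases N) (simp_all add: lessThan_Suc_atMost)
qed (rule one_minus_sqrt_coeff_nonneg)

lemma one_minus_sqrt_coeff_convolution:
  "(\<Sum>i\<le>n. one_minus_sqrt_coeff i * one_minus_sqrt_coeff (n - i))
     = 2 * one_minus_sqrt_coeff n - (if n = 1 then 1 else 0)"
proof (cases "n = 0")
  case False
  let ?b = sqrt_one_minus_coeff and ?c = one_minus_sqrt_coeff
  have "?b i * ?b (n - i) = ?c i * ?c (n - i) + (if i \<in> {0, n} then ?b n else 0)" if "i \<le> n" for i
    using that False by (auto simp: one_minus_sqrt_coeff_def)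
  moreover have "{..n} \<inter> {i. i \<in> {0, n}} = {0, n}"
    by auto
  ultimately have "(\<Sum>i\<le>n. ?b i * ?b (n - i)) = (\<Sum>i\<le>n. ?c i * ?c (n - i)) + 2 * ?b n"
    using False by (simp add: sum.distrib sum.If_cases)
  then show ?thesis
    using sqrt_one_minus_coeff_convolution[of n] False by (auto simp: one_minus_sqrt_coeff_def)
qed simp

lemma suminf_one_minus_sqrt_coeff: "(\<Sum>n. one_minus_sqrt_coeff n) = 1"
proof -
  let ?c = one_minus_sqrt_coeff
  let ?s = "\<Sum>n. ?c n"
  have abs: "summable (\<lambda>n. norm (?c n))"
    using summable_one_minus_sqrt_coeff by (simp add: one_minus_sqrt_coeff_nonneg)
  have "(\<lambda>k. 2 * ?c k - (if k = 1 then 1 else 0)) sums (?s * ?s)"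
    using Cauchy_product_sums[OF abs abs] by (simp add: one_minus_sqrt_coeff_convolution)
  moreover have "(\<lambda>k. 2 * ?c k - (if k = 1 then 1 else 0)) sums (2 * ?s - 1)"
    by (intro sums_diff sums_mult summable_sums summable_one_minus_sqrt_coeff)
      (rule sums_single[of 1 "\<lambda>_. 1"])
  ultimately have "?s * ?s = 2 * ?s - 1"
    by (rule sums_unique2)
  then have "(?s - 1)^2 = 0"
    by (simp add: power2_eq_square algebra_simps)
  then show ?thesis by simp
qed

lemma sum_Cauchy_product_scaleR:
  fixes a :: "nat \<Rightarrow> real" and b :: "nat \<Rightarrow> 'a::real_vector"
  shows "(\<Sum>k<n. \<Sum>i\<le>k. a i *\<^sub>R b (k - i)) = (\<Sum>i<n. a i *\<^sub>R (\<Sum>j<n - i. b j))"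
proof (induction n)
  case (Suc n)
  have "(\<Sum>i<Suc n. a i *\<^sub>R (\<Sum>j<Suc n - i. b j))
      = (\<Sum>i<n. a i *\<^sub>R (\<Sum>j<n - i. b j)) + (\<Sum>i\<le>n. a i *\<^sub>R b (n - i))"
    by (simp add: Suc_diff_le lessThan_Suc_atMost[symmetric] scaleR_add_right sum.distrib)
  then show ?case
    using Suc by simp
qed simp

lemma Cauchy_product_sums_scaleR:
  fixes a :: "nat \<Rightarrow> real" and b :: "nat \<Rightarrow> 'a::{real_normed_algebra,banach}"
  assumes a: "summable (\<lambda>k. norm (a k))" and b: "summable (\<lambda>k. norm (b k))"
  shows "(\<lambda>k. \<Sum>i\<le>k. a i *\<^sub>R b (k - i)) sums ((\<Sum>k. a k) *\<^sub>R (\<Sum>k. b k))"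
proof -
  define B where "B n = (\<Sum>j<n. b j)" for n
  define t where "t i n = (if i < n then a i *\<^sub>R B (n - i) else 0)" for i n
  have "(\<lambda>n. \<Sum>i. t i n) \<longlonglongrightarrow> (\<Sum>i. a i *\<^sub>R (\<Sum>k. b k))"
  proof (rule tannerys_theorem[THEN conjunct2, THEN conjunct2])
    fix i
    have "(\<lambda>n. B (n - i)) \<longlonglongrightarrow> (\<Sum>k. b k)"
      unfolding B_def
      by (rule filterlim_compose[OF summable_LIMSEQ[OF summable_norm_cancel[OF b]]])
        (rule filterlim_minus_const_nat_at_top)
    then have "(\<lambda>n. a i *\<^sub>R B (n - i)) \<longlonglongrightarrow> a i *\<^sub>R (\<Sum>k. b k)"
      by (intro tendsto_scaleR tendsto_const)
    moreover have "eventually (\<lambda>n. a i *\<^sub>R B (n - i) = t i n) sequentially"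
      using eventually_gt_at_top[of i] by eventually_elim (simp add: t_def)
    ultimately show "(\<lambda>n. t i n) \<longlonglongrightarrow> a i *\<^sub>R (\<Sum>k. b k)"
      by (rule Lim_transform_eventually)
  next
    have "norm (B n) \<le> (\<Sum>k. norm (b k))" for n
      unfolding B_def using b
      by (metis norm_sum order_trans sum_le_suminf finite_lessThan norm_ge_zero)
    moreover have "0 \<le> (\<Sum>k. norm (b k))" by (rule suminf_nonneg[OF b]) simp
    ultimately show "eventually (\<lambda>(i, n). norm (t i n) \<le> norm (a i) * (\<Sum>k. norm (b k)))
        (at_top \<times>\<^sub>F sequentially)"
      by (intro always_eventually) (auto simp: t_def mult_left_mono)
    show "summable (\<lambda>i. norm (a i) * (\<Sum>k. norm (b k)))"
      by (rule summable_mult2[OF a])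
  qed simp
  moreover have "(\<Sum>i. t i n) = (\<Sum>k<n. \<Sum>i\<le>k. a i *\<^sub>R b (k - i))" for n
    unfolding sum_Cauchy_product_scaleR B_def[symmetric] by (subst suminf_finite[of "{..<n}"]) (auto simp: t_def)
  ultimately show ?thesis
    unfolding sums_def suminf_scaleR_left[OF summable_norm_cancel[OF a]] by simp
qed

text \<open>\<open>shifted_power \<mu> m n\<close> stands for \<open>(\<mu> + m)\<^sup>n - \<mu>\<^sup>n\<close>, which makes sense
  without a unit.\<close>

primrec shifted_power :: "real \<Rightarrow> 'a::real_normed_algebra \<Rightarrow> nat \<Rightarrow> 'a" where
  "shifted_power \<mu> m 0 = 0"
| "shifted_power \<mu> m (Suc n) = \<mu> *\<^sub>R shifted_power \<mu> m n + \<mu>^n *\<^sub>R m + m * shifted_power \<mu> m n"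

lemma shifted_power_mult:
  "shifted_power \<mu> m i * shifted_power \<mu> m j
     = shifted_power \<mu> m (i + j) - \<mu>^i *\<^sub>R shifted_power \<mu> m j - \<mu>^j *\<^sub>R shifted_power \<mu> m i"
proof (induction i)
  case (Suc i)
  have "shifted_power \<mu> m (Suc i) * shifted_power \<mu> m j
      = \<mu> *\<^sub>R (shifted_power \<mu> m i * shifted_power \<mu> m j) + \<mu>^i *\<^sub>R (m * shifted_power \<mu> m j)
        + m * (shifted_power \<mu> m i * shifted_power \<mu> m j)"
    by (simp add: distrib_right mult.assoc)
  also have "\<dots> = shifted_power \<mu> m (Suc i + j) - \<mu>^(Suc i) *\<^sub>R shifted_power \<mu> m j
                   - \<mu>^j *\<^sub>R shifted_power \<mu> m (Suc i)"
    unfolding Suc.IH by (simp add: algebra_simps power_add)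
  finally show ?case .
qed simp

lemma shifted_power_commute:
  assumes "p * m = m * p"
  shows "p * shifted_power \<mu> m n = shifted_power \<mu> m n * p"
proof (induction n)
  case (Suc n)
  have "p * shifted_power \<mu> m (Suc n)
      = \<mu> *\<^sub>R (p * shifted_power \<mu> m n) + \<mu>^n *\<^sub>R (p * m) + (p * m) * shifted_power \<mu> m n"
    by (simp add: distrib_left mult.assoc)
  also have "\<dots> = shifted_power \<mu> m (Suc n) * p"
    by (simp add: Suc.IH assms distrib_right mult.assoc)
  finally show ?case .
qed simp

lemma norm_shifted_power_le:
  fixes m :: "'a::real_normed_algebra"
  assumes "\<And>y. norm (\<mu> *\<^sub>R y + m * y) \<le> norm y"
  shows "norm (\<mu>^n *\<^sub>R y + shifted_power \<mu> m n * y) \<le> norm y"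
proof (induction n)
  case (Suc n)
  define z where "z = \<mu>^n *\<^sub>R y + shifted_power \<mu> m n * y"
  have "\<mu>^(Suc n) *\<^sub>R y + shifted_power \<mu> m (Suc n) * y = \<mu> *\<^sub>R z + m * z"
    unfolding z_def by (simp add: algebra_simps mult.assoc)
  then show ?case
    using assms[of z] Suc.IH unfolding z_def[symmetric] by simp
qed simp

text \<open>The Cauchy product of the series \<open>\<Sum>n. c\<^sub>n ((\<mu> + m)\<^sup>n - \<mu>\<^sup>n)\<close> with itself; its
  sum is the identity \<open>(1 - \<surd>(1 - s))\<^sup>2 = 2 (1 - \<surd>(1 - s)) - s\<close> at \<open>s = \<mu> + m\<close>
  with the scalar part split off.\<close>

lemma shifted_power_convolution:
  fixes \<mu> :: real and m :: "'a::real_normed_algebra"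
  defines "f \<equiv> shifted_power \<mu> m" and "c \<equiv> one_minus_sqrt_coeff"
  shows "(\<Sum>i\<le>k. (c i *\<^sub>R f i) * (c (k - i) *\<^sub>R f (k - i)))
       = 2 *\<^sub>R (c k *\<^sub>R f k) - (if k = 1 then m else 0)
         - 2 *\<^sub>R (\<Sum>i\<le>k. (c i * \<mu>^i) *\<^sub>R (c (k - i) *\<^sub>R f (k - i)))"
proof -
  define G where "G = (\<Sum>i\<le>k. (c i * \<mu>^i) *\<^sub>R (c (k - i) *\<^sub>R f (k - i)))"
  have "(c i *\<^sub>R f i) * (c (k - i) *\<^sub>R f (k - i))
      = (c i * c (k - i)) *\<^sub>R f k - (c i * \<mu>^i) *\<^sub>R (c (k - i) *\<^sub>R f (k - i))
        - (c (k - i) * \<mu>^(k - i)) *\<^sub>R (c (k - (k - i)) *\<^sub>R f (k - (k - i)))"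
    if "i \<le> k" for i
    using that shifted_power_mult[of \<mu> m i "k - i"] unfolding f_def
    by (simp add: scaleR_diff_right mult_ac)
  then have "(\<Sum>i\<le>k. (c i *\<^sub>R f i) * (c (k - i) *\<^sub>R f (k - i)))
      = (\<Sum>i\<le>k. c i * c (k - i)) *\<^sub>R f k - G
        - (\<Sum>i\<le>k. (c (k - i) * \<mu>^(k - i)) *\<^sub>R (c (k - (k - i)) *\<^sub>R f (k - (k - i))))"
    unfolding G_def by (simp add: sum_subtractf scaleR_sum_left)
  also have "(\<Sum>i\<le>k. (c (k - i) * \<mu>^(k - i)) *\<^sub>R (c (k - (k - i)) *\<^sub>R f (k - (k - i)))) = G"
    unfolding G_def
    by (rule sum.reindex_bij_witness[where i="\<lambda>i. k - i" and j="\<lambda>i. k - i"]) auto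
  finally have "(\<Sum>i\<le>k. (c i *\<^sub>R f i) * (c (k - i) *\<^sub>R f (k - i)))
      = (\<Sum>i\<le>k. c i * c (k - i)) *\<^sub>R f k - G - G" .
  moreover have "(\<Sum>i\<le>k. c i * c (k - i)) *\<^sub>R f k = 2 *\<^sub>R (c k *\<^sub>R f k) - (if k = 1 then m else 0)"
    unfolding c_def one_minus_sqrt_coeff_convolution
    by (cases "k = 1") (simp_all add: f_def scaleR_left_diff_distrib)
  ultimately show ?thesis
    unfolding G_def[symmetric] by (simp add: scaleR_2)
qed

text \<open>Formally \<open>1 - \<surd>(1 - (\<mu> + m)) = C + sqrt_series \<mu> m\<close> with the scalar
  \<open>C = (\<Sum>n. one_minus_sqrt_coeff n * \<mu>\<^sup>n)\<close>.\<close>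

definition sqrt_series :: "real \<Rightarrow> 'a::real_normed_algebra \<Rightarrow> 'a" where
  "sqrt_series \<mu> m = (\<Sum>n. one_minus_sqrt_coeff n *\<^sub>R shifted_power \<mu> m n)"

section \<open>C*-algebras\<close>

locale cstar =
  fixes sc :: "complex \<Rightarrow> 'a::{real_normed_algebra,banach} \<Rightarrow> 'a"
    and star :: "'a \<Rightarrow> 'a"
  assumes cstar_algebra: "cstar_algebra sc star"
begin

lemma sc_add: "sc c (a + b) = sc c a + sc c b"
  and sc_sc: "sc c (sc d a) = sc (c * d) a"
  and sc_of_real: "sc (complex_of_real r) a = r *\<^sub>R a"
  and sc_mult_left: "sc c (a * b) = sc c a * b"
  and sc_mult_right: "sc c (a * b) = a * sc c b"
  and norm_sc: "norm (sc c a) = cmod c * norm a"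
  and star_star [simp]: "star (star a) = a"
  and star_add: "star (a + b) = star a + star b"
  and star_sc: "star (sc c a) = sc (cnj c) (star a)"
  and star_mult: "star (a * b) = star b * star a"
  and norm_star_mult_self: "norm (star a * a) = (norm a)\<^sup>2"
  using cstar_algebra unfolding cstar_algebra_def by meson+

lemma star_0 [simp]: "star 0 = 0"
  using star_add[of 0 0] by simp

lemma star_minus: "star (- a) = - star a"
  using star_add[of a "- a"] by (simp add: add_eq_0_iff2)

lemma star_diff: "star (a - b) = star a - star b"
  using star_add[of a "- b"] by (simp add: star_minus)

lemma star_scaleR: "star (r *\<^sub>R a) = r *\<^sub>R star a"
  using star_sc[of "complex_of_real r" a] by (simp add: sc_of_real)

lemma sc_0 [simp]: "sc c 0 = 0"
  using sc_add[of c 0 0] by simp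

lemma sc_minus: "sc c (- a) = - sc c a"
  using sc_add[of c a "- a"] by (simp add: add_eq_0_iff2)

lemma sc_diff: "sc c (a - b) = sc c a - sc c b"
  using sc_add[of c a "- b"] by (simp add: sc_minus)

lemma norm_star [simp]: "norm (star a) = norm a"
proof -
  have le: "norm b \<le> norm (star b)" for b
  proof (cases "b = 0")
    case False
    have "(norm b)^2 \<le> norm (star b) * norm b"
      using norm_mult_ineq[of "star b" b] by (simp add: norm_star_mult_self)
    then show ?thesis using False by (simp add: power2_eq_square)
  qed simp
  show ?thesis using le[of a] le[of "star a"] by simp
qed

lemma star_mult_self_eq_0_iff: "star a * a = 0 \<longleftrightarrow> a = 0"
  using norm_star_mult_self[of a] by auto

lemma selfadjoint_eq_0_if_cube_eq_0:
  assumes "star k = k" and "k * k * k = 0"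
  shows "k = 0"
proof -
  have "star (k * k) * (k * k) = 0"
    using assms by (simp add: star_mult mult.assoc[symmetric])
  then have "k * k = 0"
    by (simp only: star_mult_self_eq_0_iff)
  then show ?thesis
    using assms(1) star_mult_self_eq_0_iff[of k] by simp
qed

lemma bounded_linear_star: "bounded_linear star"
  by (rule bounded_linear_intro[where K=1]) (auto simp: star_add star_scaleR)

lemma norm_mult_star_self: "norm (a * star a) = (norm a)\<^sup>2"
  using norm_star_mult_self[of "star a"] by simp

lemma norm_le_if_left_mult_le:
  fixes a :: 'a
  assumes "\<And>y. norm (a * y) \<le> K * norm y" and "0 \<le> K"
  shows "norm a \<le> K"
proof (cases "a = 0")
  case False
  have "(norm a)^2 \<le> K * norm a"
    using assms(1)[of "star a"] by (simp add: norm_mult_star_self)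
  then show ?thesis using False by (simp add: power2_eq_square)
qed (use assms in simp)

definition times_i :: "'a \<Rightarrow> 'a" where
  "times_i a = sc \<i> a"

lemma times_i_times_i: "times_i (times_i a) = - a"
  unfolding times_i_def sc_sc using sc_of_real[of "-1" a] by simp

lemma times_i_minus: "times_i (- a) = - times_i a"
  unfolding times_i_def by (rule sc_minus)

lemma times_i_diff: "times_i (a - b) = times_i a - times_i b"
  unfolding times_i_def by (rule sc_diff)

lemma star_times_i: "star (times_i a) = - times_i (star a)"
  unfolding times_i_def star_sc using sc_sc[of "-1" \<i> "star a"] sc_of_real[of "-1"] by simp

lemma times_i_mult_left: "times_i a * b = times_i (a * b)"
  unfolding times_i_def by (rule sc_mult_left[symmetric])

lemma times_i_mult_right: "a * times_i b = times_i (a * b)"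
  unfolding times_i_def by (rule sc_mult_right[symmetric])

lemma norm_times_i [simp]: "norm (times_i a) = norm a"
  unfolding times_i_def norm_sc by simp

lemma star_mult_add_times_i:
  assumes "star p * q = star q * p"
  shows "star (p + times_i q) * (p + times_i q) = star p * p + star q * q"
proof -
  have "star (p + times_i q) * (p + times_i q)
      = star p * p + times_i (star p * q - star q * p) + star q * q"
    by (simp add: star_add star_times_i algebra_simps times_i_mult_left times_i_mult_right
        times_i_times_i times_i_diff)
  then show ?thesis
    using assms by (simp add: times_i_def sc_diff)
qed

lemma norm_le_if_star_mult_add_eq:
  assumes "star p * q = star q * p" and "star p * p + star q * q = star z * z"
  shows "norm q \<le> norm z"
proof -
  have "star p * (- q) = star (- q) * p" and "star p * p + star (- q) * (- q) = star z * z"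
    using assms by (simp_all add: star_minus)
  then have "(norm (p + times_i q))^2 = (norm z)^2" and "(norm (p + times_i (- q)))^2 = (norm z)^2"
    using assms by (simp_all only: norm_star_mult_self[symmetric] star_mult_add_times_i)
  then have "norm (p + times_i q) = norm z" and "norm (p + times_i (- q)) = norm z"
    by (simp_all add: power2_eq_iff_nonneg)
  moreover have "2 *\<^sub>R times_i q = (p + times_i q) - (p + times_i (- q))"
    by (simp add: times_i_minus scaleR_2)
  then have "2 * norm q \<le> norm (p + times_i q) + norm (p + times_i (- q))"
    by (metis norm_times_i norm_scaleR norm_triangle_ineq4 abs_of_nonneg zero_le_numeral)
  ultimately show ?thesis by simp
qed

context
  fixes \<mu> :: real and m :: 'a
  assumes abs_mu_le: "\<bar>\<mu>\<bar> \<le> 1"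
    and contraction: "\<And>y. norm (\<mu> *\<^sub>R y + m * y) \<le> norm y"
begin

lemma norm_shifted_power_le_2: "norm (shifted_power \<mu> m n) \<le> 2"
proof (rule norm_le_if_left_mult_le)
  fix y :: 'a
  have "\<bar>\<mu>\<bar>^n \<le> 1"
    using abs_mu_le by (simp add: power_le_one)
  then have "norm (\<mu>^n *\<^sub>R y) \<le> norm y"
    by (simp add: power_abs mult_left_le_one_le)
  moreover have "norm (shifted_power \<mu> m n * y)
      \<le> norm (\<mu>^n *\<^sub>R y + shifted_power \<mu> m n * y) + norm (\<mu>^n *\<^sub>R y)"
    using norm_triangle_ineq4[of "\<mu>^n *\<^sub>R y + shifted_power \<mu> m n * y" "\<mu>^n *\<^sub>R y"] by simp
  ultimately show "norm (shifted_power \<mu> m n * y) \<le> 2 * norm y"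
    using norm_shifted_power_le[OF contraction, of n y] by simp
qed simp

lemma summable_norm_sqrt_series_coeffs:
  "summable (\<lambda>n. norm (one_minus_sqrt_coeff n * \<mu>^n))"
proof (rule summable_comparison_test'[OF summable_one_minus_sqrt_coeff])
  show "norm (norm (one_minus_sqrt_coeff n * \<mu>^n)) \<le> one_minus_sqrt_coeff n" for n
    using abs_mu_le one_minus_sqrt_coeff_nonneg[of n]
    by (simp add: abs_mult power_abs mult_left_le power_le_one)
qed

lemma summable_norm_sqrt_series_terms:
  "summable (\<lambda>n. norm (one_minus_sqrt_coeff n *\<^sub>R shifted_power \<mu> m n))"
proof (rule summable_comparison_test'[OF summable_mult[OF summable_one_minus_sqrt_coeff, of 2]])
  show "norm (norm (one_minus_sqrt_coeff n *\<^sub>R shifted_power \<mu> m n)) \<le> 2 * one_minus_sqrt_coeff n" for n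
    using one_minus_sqrt_coeff_nonneg[of n] norm_shifted_power_le_2[of n]
    by (simp add: mult_left_mono mult.commute)
qed

lemma sqrt_series_mult_self:
  "sqrt_series \<mu> m * sqrt_series \<mu> m
     = (2 * (1 - (\<Sum>n. one_minus_sqrt_coeff n * \<mu>^n))) *\<^sub>R sqrt_series \<mu> m - m"
proof -
  let ?c = one_minus_sqrt_coeff and ?f = "shifted_power \<mu> m"
  let ?C = "\<Sum>n. ?c n * \<mu>^n" and ?F = "sqrt_series \<mu> m"
  have "(\<lambda>k. \<Sum>i\<le>k. (?c i *\<^sub>R ?f i) * (?c (k - i) *\<^sub>R ?f (k - i))) sums (?F * ?F)"
    unfolding sqrt_series_def
    by (rule Cauchy_product_sums[OF summable_norm_sqrt_series_terms summable_norm_sqrt_series_terms])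
  moreover have "(\<lambda>k. 2 *\<^sub>R (?c k *\<^sub>R ?f k) - (if k = 1 then m else 0)
      - 2 *\<^sub>R (\<Sum>i\<le>k. (?c i * \<mu>^i) *\<^sub>R (?c (k - i) *\<^sub>R ?f (k - i))))
      sums (2 *\<^sub>R ?F - m - 2 *\<^sub>R (?C *\<^sub>R ?F))"
    unfolding sqrt_series_def
    by (intro sums_diff sums_scaleR_right summable_sums sums_single
        summable_norm_cancel[OF summable_norm_sqrt_series_terms]
        Cauchy_product_sums_scaleR summable_norm_sqrt_series_coeffs summable_norm_sqrt_series_terms)
  ultimately have "?F * ?F = 2 *\<^sub>R ?F - m - 2 *\<^sub>R (?C *\<^sub>R ?F)"
    unfolding shifted_power_convolution by (rule sums_unique2)
  then show ?thesis
    by (simp add: algebra_simps scaleR_2 scaleR_left_diff_distrib)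
qed

lemma sqrt_series_commute:
  assumes "p * m = m * p"
  shows "p * sqrt_series \<mu> m = sqrt_series \<mu> m * p"
proof -
  have summable: "summable (\<lambda>n. one_minus_sqrt_coeff n *\<^sub>R shifted_power \<mu> m n)"
    by (rule summable_norm_cancel[OF summable_norm_sqrt_series_terms])
  have "p * sqrt_series \<mu> m = (\<Sum>n. p * (one_minus_sqrt_coeff n *\<^sub>R shifted_power \<mu> m n))"
    unfolding sqrt_series_def by (rule suminf_mult[OF summable, symmetric])
  also have "\<dots> = (\<Sum>n. (one_minus_sqrt_coeff n *\<^sub>R shifted_power \<mu> m n) * p)"
    using shifted_power_commute[OF assms] by simp
  also have "\<dots> = sqrt_series \<mu> m * p"
    unfolding sqrt_series_def by (rule suminf_mult2[OF summable, symmetric])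
  finally show ?thesis .
qed

lemma norm_sqrt_series_le:
  "norm ((\<Sum>n. one_minus_sqrt_coeff n * \<mu>^n) *\<^sub>R y + sqrt_series \<mu> m * y) \<le> norm y"
proof -
  let ?c = one_minus_sqrt_coeff and ?f = "shifted_power \<mu> m"
  have "(\<lambda>n. (?c n * \<mu>^n) *\<^sub>R y) sums ((\<Sum>n. ?c n * \<mu>^n) *\<^sub>R y)"
    by (rule sums_scaleR_left[OF summable_sums[OF summable_norm_cancel[OF summable_norm_sqrt_series_coeffs]]])
  moreover have "(\<lambda>n. (?c n *\<^sub>R ?f n) * y) sums (sqrt_series \<mu> m * y)"
    unfolding sqrt_series_def
    by (rule sums_mult2[OF summable_sums[OF summable_norm_cancel[OF summable_norm_sqrt_series_terms]]])
  moreover have "(?c n * \<mu>^n) *\<^sub>R y + (?c n *\<^sub>R ?f n) * y = ?c n *\<^sub>R (\<mu>^n *\<^sub>R y + ?f n * y)" for n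
    by (simp add: scaleR_add_right)
  ultimately have "(\<lambda>n. ?c n *\<^sub>R (\<mu>^n *\<^sub>R y + ?f n * y))
      sums ((\<Sum>n. ?c n * \<mu>^n) *\<^sub>R y + sqrt_series \<mu> m * y)"
    using sums_add by fastforce
  then have "(\<Sum>n. ?c n * \<mu>^n) *\<^sub>R y + sqrt_series \<mu> m * y
      = (\<Sum>n. ?c n *\<^sub>R (\<mu>^n *\<^sub>R y + ?f n * y))"
    by (rule sums_unique)
  also have "norm \<dots> \<le> (\<Sum>n. ?c n * norm y)"
  proof (rule norm_suminf_le)
    show "norm (?c n *\<^sub>R (\<mu>^n *\<^sub>R y + ?f n * y)) \<le> ?c n * norm y" for n
      using norm_shifted_power_le[OF contraction] one_minus_sqrt_coeff_nonneg[of n]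
      by (simp add: mult_left_mono)
  qed (rule summable_mult2[OF summable_one_minus_sqrt_coeff])
  finally show ?thesis
    by (simp add: suminf_mult2[OF summable_one_minus_sqrt_coeff, symmetric] suminf_one_minus_sqrt_coeff)
qed

lemma star_sqrt_series:
  assumes "star m = m"
  shows "star (sqrt_series \<mu> m) = sqrt_series \<mu> m"
proof -
  have "star (shifted_power \<mu> m n) = shifted_power \<mu> m n" for n
  proof (induction n)
    case (Suc n)
    then show ?case
      using shifted_power_commute[of m m \<mu> n] assms by (simp add: star_add star_scaleR star_mult)
  qed simp
  then show ?thesis
    unfolding sqrt_series_def
    by (simp add: bounded_linear.suminf[OF bounded_linear_star summable_norm_cancel[OF summable_norm_sqrt_series_terms]]
        star_scaleR)
qed

end

section \<open>Positive elements\<close>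

text \<open>A self-adjoint \<open>h\<close> is positive iff \<open>\<parallel>t - h\<parallel> \<le> t\<close> for some \<open>t \<ge> 0\<close>; without a unit,
  \<open>t - h\<close> is read as an operator of left multiplication.\<close>

definition pos_bound :: "real \<Rightarrow> 'a \<Rightarrow> bool" where
  "pos_bound t h \<longleftrightarrow> (\<forall>y. norm (t *\<^sub>R y - h * y) \<le> t * norm y)"

definition positive :: "'a \<Rightarrow> bool" where
  "positive h \<longleftrightarrow> star h = h \<and> (\<exists>t\<ge>0. pos_bound t h)"

lemma positive_add:
  assumes "positive a" and "positive b"
  shows "positive (a + b)"
proof -
  obtain s t where "star a = a" "star b = b" "0 \<le> s" "0 \<le> t" "pos_bound s a" "pos_bound t b"
    using assms unfolding positive_def by blast
  moreover have "norm ((s + t) *\<^sub>R y - (a + b) * y) \<le> (s + t) * norm y"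
    if "pos_bound s a" "pos_bound t b" for y
  proof -
    have "norm ((s + t) *\<^sub>R y - (a + b) * y) = norm ((s *\<^sub>R y - a * y) + (t *\<^sub>R y - b * y))"
      by (simp add: algebra_simps)
    also have "\<dots> \<le> s * norm y + t * norm y"
      using that unfolding pos_bound_def by (meson add_mono norm_triangle_ineq order_trans)
    finally show ?thesis by (simp add: algebra_simps)
  qed
  ultimately show ?thesis
    unfolding positive_def pos_bound_def by (auto simp: star_add intro!: exI[of _ "s + t"])
qed

lemma positive_scaleR:
  assumes "positive a" and "0 \<le> c"
  shows "positive (c *\<^sub>R a)"
proof -
  obtain t where "star a = a" "0 \<le> t" "pos_bound t a"
    using assms(1) unfolding positive_def by blast
  moreover have "norm ((c * t) *\<^sub>R y - (c *\<^sub>R a) * y) = c * norm (t *\<^sub>R y - a * y)" for y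
  proof -
    have "(c * t) *\<^sub>R y - (c *\<^sub>R a) * y = c *\<^sub>R (t *\<^sub>R y - a * y)"
      by (simp add: scaleR_diff_right)
    then show ?thesis using assms(2) by simp
  qed
  ultimately show ?thesis
    using assms(2) unfolding positive_def pos_bound_def
    by (auto simp: star_scaleR mult.assoc intro!: exI[of _ "c * t"] mult_left_mono)
qed

lemma norm_diff_mult_le_if_square_eq:
  assumes "star b = b" and "star F = F" and "b * F = F * b" and FF: "F * F = 2 *\<^sub>R F - b * b"
  shows "norm (z - F * z) \<le> norm z"
proof (rule norm_le_if_star_mult_add_eq)
  \<comment> \<open>\<open>1 - F\<close> is a square root of \<open>1 - b * b\<close>, so
      \<open>(b z)\<^sup>* (b z) + ((1 - F) z)\<^sup>* ((1 - F) z) = z\<^sup>* z\<close>.\<close>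
  have "b * (F * z) = F * (b * z)"
    by (metis assms(3) mult.assoc)
  then show "star (b * z) * (z - F * z) = star (z - F * z) * (b * z)"
    using assms(1,2) by (simp add: star_mult star_diff right_diff_distrib left_diff_distrib mult.assoc)
  have star_bz: "star (b * z) = star z * b" and star_Fz: "star (z - F * z) = star z - star z * F"
    using assms(1,2) by (simp_all add: star_mult star_diff)
  have "star (b * z) * (b * z) + star (z - F * z) * (z - F * z)
      = star z * (b * b) * z + star z * z - 2 *\<^sub>R (star z * F * z) + star z * (F * F) * z"
    unfolding star_bz star_Fz by (simp add: algebra_simps scaleR_2)
  also have "\<dots> = star z * z"
    unfolding FF by (simp add: algebra_simps scaleR_2)
  finally show "star (b * z) * (b * z) + star (z - F * z) * (z - F * z) = star z * z" .
qed

lemma norm_diff_square_le: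
  assumes "star b = b" and "norm b \<le> 1"
  shows "norm (y - (b * b) * y) \<le> norm y"
proof -
  define F where "F = sqrt_series 0 (b * b)"
  have contraction: "norm (0 *\<^sub>R z + (b * b) * z) \<le> norm z" for z
  proof -
    have "norm (b * (b * z)) \<le> norm b * (norm b * norm z)"
      by (rule order_trans[OF norm_mult_ineq mult_left_mono[OF norm_mult_ineq norm_ge_zero]])
    also have "\<dots> \<le> norm z"
      using assms(2) by (simp add: mult.assoc[symmetric] mult_left_le_one_le mult_le_one)
    finally show ?thesis by (simp add: mult.assoc)
  qed
  have "(\<lambda>n. one_minus_sqrt_coeff n * 0^n) = (\<lambda>_. 0)"
    by (simp add: fun_eq_iff power_0_left)
  then have FF: "F * F = 2 *\<^sub>R F - b * b"
    using sqrt_series_mult_self[of 0 "b * b", OF _ contraction] unfolding F_def by simp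
  have "star F = F"
    unfolding F_def by (rule star_sqrt_series[OF _ contraction]) (simp_all add: star_mult assms(1))
  moreover have "b * F = F * b"
    unfolding F_def by (rule sqrt_series_commute[OF _ contraction]) (simp_all add: mult.assoc)
  ultimately have contraction_F: "norm (z - F * z) \<le> norm z" for z
    using norm_diff_mult_le_if_square_eq[OF assms(1) _ _ FF] by blast
  have "(y - F * y) - F * (y - F * y) = y - 2 *\<^sub>R (F * y) + (F * F) * y"
    by (simp add: algebra_simps scaleR_2)
  also have "\<dots> = y - (b * b) * y"
    unfolding FF by (simp add: algebra_simps scaleR_2)
  finally have eq: "y - (b * b) * y = (y - F * y) - F * (y - F * y)"
    by (rule sym)
  show ?thesis
    unfolding eq using contraction_F[of y] contraction_F[of "y - F * y"] by linarith
qed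

lemma pos_bound_square:
  assumes "star a = a"
  shows "pos_bound ((norm a)\<^sup>2) (a * a)"
proof (cases "a = 0")
  case False
  define b where "b = (1 / norm a) *\<^sub>R a"
  have "star b = b" and "norm b \<le> 1"
    using False assms by (simp_all add: b_def star_scaleR)
  moreover have "a * a = (norm a)\<^sup>2 *\<^sub>R (b * b)"
    using False by (simp add: b_def power2_eq_square)
  ultimately show ?thesis
    unfolding pos_bound_def
    by (simp add: scaleR_diff_right[symmetric] mult_left_mono norm_diff_square_le)
qed (simp add: pos_bound_def)

lemma positive_square: "star a = a \<Longrightarrow> positive (a * a)"
  using pos_bound_square[of a] unfolding positive_def
  by (auto simp: star_mult intro!: exI[of _ "(norm a)\<^sup>2"])

lemma sqrt_if_contraction:
  assumes "star q = q" and contraction: "\<And>y. norm (y - q * y) \<le> norm y"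
  obtains F where "F * F = q" and "star F = F" and "\<And>y. norm (y - F * y) \<le> norm y"
    and "\<And>p. p * q = q * p \<Longrightarrow> p * F = F * p"
proof -
  have contraction': "norm (1 *\<^sub>R y + (- q) * y) \<le> norm y" for y
    using contraction[of y] by simp
  \<comment> \<open>The binomial series of \<open>\<surd>(1 - (1 - q))\<close>.\<close>
  define F where "F = - sqrt_series 1 (- q)"
  have "F * F = q"
    using sqrt_series_mult_self[of 1 "- q", OF _ contraction'] by (simp add: F_def suminf_one_minus_sqrt_coeff)
  moreover have "star F = F"
    using star_sqrt_series[of 1 "- q", OF _ contraction'] assms(1) by (simp add: F_def star_minus)
  moreover have "norm (y - F * y) \<le> norm y" for y
    using norm_sqrt_series_le[of 1 "- q", OF _ contraction'] by (simp add: F_def suminf_one_minus_sqrt_coeff)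
  moreover have "p * F = F * p" if "p * q = q * p" for p
    using sqrt_series_commute[of 1 "- q", OF _ contraction'] that by (simp add: F_def)
  ultimately show ?thesis
    by (rule that)
qed

lemma eq_0_if_pos_bound_0: "pos_bound 0 h \<Longrightarrow> h = 0"
  using norm_le_if_left_mult_le[of h 0] unfolding pos_bound_def by simp

lemma positive_sqrt:
  assumes "positive h"
  obtains r where "star r = r" and "r * r = h" and "positive r"
    and "\<And>p. p * h = h * p \<Longrightarrow> p * r = r * p"
proof -
  obtain t where star_h: "star h = h" and "0 \<le> t" and bound: "pos_bound t h"
    using assms unfolding positive_def by blast
  show ?thesis
  proof (cases "t = 0")
    case True
    then have "h = 0"
      using bound by (simp add: eq_0_if_pos_bound_0)
    then show ?thesis
      by (intro that[of 0]) (auto simp: positive_def pos_bound_def)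
  next
    case False
    with \<open>0 \<le> t\<close> have "0 < t" by simp
    define q where "q = (1 / t) *\<^sub>R h"
    have "star q = q"
      by (simp add: q_def star_scaleR star_h)
    moreover have "norm (y - q * y) \<le> norm y" for y
    proof -
      have "t *\<^sub>R y - h * y = t *\<^sub>R (y - q * y)"
        using \<open>0 < t\<close> by (simp add: q_def scaleR_diff_right)
      then show ?thesis
        using bound \<open>0 < t\<close> unfolding pos_bound_def by (metis norm_scaleR abs_of_pos mult_le_cancel_left_pos)
    qed
    ultimately obtain F where FF: "F * F = q" and star_F: "star F = F"
      and contraction_F: "\<And>y. norm (y - F * y) \<le> norm y"
      and commute_F: "\<And>p. p * q = q * p \<Longrightarrow> p * F = F * p"
      by (rule sqrt_if_contraction) blast
    define r where "r = sqrt t *\<^sub>R F"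
    have star_r: "star r = r"
      by (simp add: r_def star_scaleR star_F)
    moreover have "r * r = h"
      using \<open>0 < t\<close> by (simp add: r_def FF q_def)
    moreover have "pos_bound (sqrt t) r"
      using contraction_F \<open>0 < t\<close> by (simp add: r_def pos_bound_def scaleR_diff_right[symmetric] mult_left_mono)
    then have "positive r"
      unfolding positive_def using star_r \<open>0 < t\<close> by (intro conjI exI[of _ "sqrt t"]) simp_all
    moreover have "p * r = r * p" if "p * h = h * p" for p
      using commute_F[of p] that by (simp add: r_def q_def)
    ultimately show ?thesis
      by (rule that)
  qed
qed

lemma pos_bound_norm:
  assumes "positive h"
  shows "pos_bound (norm h) h"
proof -
  obtain r where "star r = r" and "r * r = h"
    using positive_sqrt[OF assms] by blast
  then show ?thesis
    using pos_bound_square[of r] norm_star_mult_self[of r] by simp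
qed

lemma cstar_pos_if_positive:
  assumes "positive h"
  shows "cstar_pos star h"
proof -
  obtain r where "star r = r" and "r * r = h"
    using positive_sqrt[OF assms] by blast
  then have "h = star r * r"
    by simp
  then show ?thesis
    unfolding cstar_pos_def by blast
qed

lemma norm_square_le_norm_add_positive:
  assumes "star a = a" and "positive B" and "a * B = B * a"
  shows "(norm a)\<^sup>2 \<le> norm (a * a + B)"
proof -
  obtain \<beta> where "star \<beta> = \<beta>" and "\<beta> * \<beta> = B" and "a * \<beta> = \<beta> * a"
    using positive_sqrt[OF assms(2)] assms(3) by metis
  then have commute: "star \<beta> * a = star a * \<beta>" and sum: "star \<beta> * \<beta> + star a * a = a * a + B"
    using assms(1) by (simp_all add: add.commute)
  have "norm a \<le> norm (\<beta> + times_i a)"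
    by (rule norm_le_if_star_mult_add_eq[OF commute]) (simp add: star_mult_add_times_i[OF commute])
  moreover have "(norm (\<beta> + times_i a))\<^sup>2 = norm (a * a + B)"
    by (simp add: norm_star_mult_self[symmetric] star_mult_add_times_i[OF commute] sum)
  ultimately show ?thesis
    by (metis norm_ge_zero power_mono)
qed

lemma positive_cube:
  assumes "positive N"
  shows "positive (N * N * N)"
proof -
  obtain r where star_r: "star r = r" and rr: "r * r = N"
    using positive_sqrt[OF assms] by blast
  have "positive ((r * r * r) * (r * r * r))"
    using star_r by (intro positive_square) (simp add: star_mult mult.assoc)
  moreover have "N * N * N = (r * r * r) * (r * r * r)"
    unfolding rr[symmetric] by (simp add: mult.assoc)
  ultimately show ?thesis
    by simp
qed

lemma eq_0_if_positive_mult_star_and_neg: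
  assumes "positive (x * star x)" and "positive (- (star x * x))"
  shows "x = 0"
proof -
  define s where "s = (norm x)\<^sup>2"
  define N where "N = - (star x * x)"
  have "0 \<le> s" and norm_N: "norm N = s" and star_N: "star N = N"
    by (simp_all add: s_def N_def norm_star_mult_self star_minus star_mult)
  define v where "v = s *\<^sub>R x - (x * star x) * x"
  have "norm v \<le> s * norm x"
    using pos_bound_norm[OF assms(1)] unfolding pos_bound_def v_def
    by (simp add: norm_mult_star_self s_def)
  then have "(norm v)\<^sup>2 \<le> (s * norm x)\<^sup>2"
    by (simp add: power_mono)
  also have "\<dots> = s^3"
    by (simp add: s_def power2_eq_square power3_eq_cube)
  finally have norm_v: "(norm v)\<^sup>2 \<le> s^3" .
  \<comment> \<open>\<open>v\<^sup>* v = - (s\<^sup>2 N + 2 s N\<^sup>2 + N\<^sup>3)\<close>, where \<open>2 s N\<^sup>2\<close> is the square of \<open>a\<close> below.\<close>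
  define a where "a = sqrt (2 * s) *\<^sub>R N"
  define B where "B = s\<^sup>2 *\<^sub>R N + N * N * N"
  have two_s: "(s * 2) *\<^sub>R y = s *\<^sub>R y + s *\<^sub>R y" for y :: 'a
    by (metis mult_2_right scaleR_add_left)
  have "star v * v = - (a * a + B)"
    using \<open>0 \<le> s\<close> unfolding v_def a_def B_def N_def
    by (simp add: star_diff star_scaleR star_mult algebra_simps power2_eq_square two_s)
  then have "(norm v)\<^sup>2 = norm (a * a + B)"
    by (metis norm_minus_cancel norm_star_mult_self)
  moreover have "positive B"
    unfolding B_def using assms(2)
    by (intro positive_add positive_scaleR positive_cube) (simp_all add: N_def)
  then have "(norm a)\<^sup>2 \<le> norm (a * a + B)"
    using star_N by (intro norm_square_le_norm_add_positive) (simp_all add: a_def B_def star_scaleR algebra_simps)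
  moreover have "(norm a)\<^sup>2 = 2 * s^3"
    using \<open>0 \<le> s\<close> by (simp add: a_def norm_N power_mult_distrib numeral_3_eq_3 power2_eq_square)
  ultimately have "s^3 \<le> 0"
    using norm_v by linarith
  then show ?thesis
    using \<open>0 \<le> s\<close> by (simp add: s_def)
qed

lemma positive_mult_star_if_positive_neg:
  assumes "positive (- (star c * c))"
  shows "positive (c * star c)"
proof -
  define re where "re = c + star c"
  define u where "u = star c - c"
  have "star re = re" and "star (times_i u) = times_i u"
    by (simp_all add: re_def u_def star_add star_diff star_times_i times_i_minus[symmetric])
  then have "positive ((1/2) *\<^sub>R (re * re) + (1/2) *\<^sub>R (times_i u * times_i u) + - (star c * c))"
    using assms by (intro positive_add positive_scaleR positive_square) simp_all
  moreover have "times_i u * times_i u = - (u * u)"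
    by (simp add: times_i_mult_left times_i_mult_right times_i_times_i)
  moreover have "re * re - u * u = 2 *\<^sub>R (c * star c) + 2 *\<^sub>R (star c * c)"
    by (simp add: re_def u_def algebra_simps scaleR_2)
  then have "c * star c = (1/2) *\<^sub>R (re * re) + (1/2) *\<^sub>R (- (u * u)) + - (star c * c)"
    by (simp add: scaleR_diff_right[symmetric] scaleR_add_right)
  ultimately show ?thesis
    by simp
qed

lemma eq_0_if_positive_neg_star_mult:
  assumes "positive (- (star c * c))"
  shows "c = 0"
  using eq_0_if_positive_mult_star_and_neg positive_mult_star_if_positive_neg assms by blast

lemma positive_star_mult_self: "positive (star x * x)"
proof -
  define h where "h = star x * x"
  have star_h: "star h = h"
    by (simp add: h_def star_mult)
  obtain b where star_b: "star b = b" and bb: "b * b = h * h" and "positive b" and hb: "h * b = b * h"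
    using positive_sqrt[OF positive_square[OF star_h]] by (metis mult.assoc)
  obtain \<beta> where star_\<beta>: "star \<beta> = \<beta>" and \<beta>\<beta>: "\<beta> * \<beta> = b"
    and \<beta>_commute: "\<And>p. p * b = b * p \<Longrightarrow> p * \<beta> = \<beta> * p"
    using positive_sqrt[OF \<open>positive b\<close>] by blast
  \<comment> \<open>\<open>k = |h| - h\<close> is twice the negative part of \<open>h\<close>; we show that it vanishes.\<close>
  define k where "k = b - h"
  have star_k: "star k = k" and kb: "k * b = b * k" and k\<beta>: "k * \<beta> = \<beta> * k"
    using star_h star_b hb \<beta>_commute[of h] \<beta>_commute[of b]
    by (simp_all add: k_def star_diff algebra_simps)
  have kk: "k * k = 2 *\<^sub>R (b * k)"
    unfolding k_def by (simp add: algebra_simps scaleR_2 bb hb)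
  then have kkk: "k * k * k = 2 *\<^sub>R (b * k * k)"
    by simp
  define w where "w = \<beta> * k"
  have star_w: "star w = w"
    using star_\<beta> star_k k\<beta> by (simp add: w_def star_mult)
  have "w * w = \<beta> * (k * \<beta>) * k"
    by (simp add: w_def mult.assoc)
  then have ww: "w * w = b * k * k"
    by (simp add: k\<beta> \<beta>\<beta>[symmetric] mult.assoc)
  have "star (x * k) * (x * k) = k * h * k"
    by (simp add: star_mult star_k h_def mult.assoc)
  also have "\<dots> = k * b * k - k * k * k"
    by (simp add: k_def algebra_simps)
  also have "\<dots> = - (w * w)"
    unfolding kkk ww kb by (simp add: scaleR_2)
  finally have neg: "star (x * k) * (x * k) = - (w * w)" .
  then have "x * k = 0"
    using positive_square[OF star_w] by (intro eq_0_if_positive_neg_star_mult) simp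
  then have "w * w = 0"
    using neg by simp
  then have "k * k * k = 0"
    by (simp add: kkk flip: ww)
  then have "k = 0"
    by (rule selfadjoint_eq_0_if_cube_eq_0[OF star_k])
  then show ?thesis
    using \<open>positive b\<close> by (simp add: k_def h_def)
qed

lemma cstar_pos_iff_positive: "cstar_pos star h \<longleftrightarrow> positive h"
  using cstar_pos_if_positive positive_star_mult_self unfolding cstar_pos_def by blast

lemma cstar_pos_add: "cstar_pos star a \<Longrightarrow> cstar_pos star b \<Longrightarrow> cstar_pos star (a + b)"
  by (simp add: cstar_pos_iff_positive positive_add)

end

section \<open>Hilbert C*-modules\<close>

lemma scaleR_four: "(4::real) *\<^sub>R c = c + c + c + c" for c :: "'a::real_vector"
proof -
  have "(4::real) *\<^sub>R c = 2 *\<^sub>R (2 *\<^sub>R c)"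
    by simp
  then show ?thesis
    by (simp only: scaleR_2 add.assoc)
qed

locale hilbert_module =
  fixes sc :: "complex \<Rightarrow> 'a::{real_normed_algebra,banach} \<Rightarrow> 'a"
    and star :: "'a \<Rightarrow> 'a"
    and scX :: "complex \<Rightarrow> 'x::ab_group_add \<Rightarrow> 'x"
    and act :: "'x \<Rightarrow> 'a \<Rightarrow> 'x"
    and ip :: "'x \<Rightarrow> 'x \<Rightarrow> 'a"
  assumes hilbert_cstar_module: "hilbert_cstar_module sc star scX act ip"
begin

sublocale cstar sc star
  using hilbert_cstar_module unfolding hilbert_cstar_module_def by unfold_locales blast

lemma ip_add_right: "ip x (y + z) = ip x y + ip x z"
  and ip_swap: "ip y x = star (ip x y)"
  and cstar_pos_ip_self: "cstar_pos star (ip x x)"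
  using hilbert_cstar_module unfolding hilbert_cstar_module_def by meson+

lemma ip_add_left: "ip (x + y) z = ip x z + ip y z"
  by (metis ip_swap ip_add_right star_add)

lemma ip_diff_right: "ip x (y - z) = ip x y - ip x z"
  by (metis ip_add_right diff_add_cancel add_diff_cancel_right')

lemma ip_diff_left: "ip (x - y) z = ip x z - ip y z"
  by (metis ip_add_left diff_add_cancel add_diff_cancel_right')

lemma ip_projection_range:
  assumes "module_projection ip K" and "w \<in> range K"
  shows "ip (K x) w = ip x w"
proof -
  obtain p where "w = K p"
    using assms(2) by blast
  moreover have "ip (K x) (K p) = ip x (K (K p))" and "K (K p) = K p"
    using assms(1) unfolding module_projection_def by blast+
  ultimately show ?thesis
    by simp
qed

lemma ip_projection_self:
  assumes "module_projection ip K"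
  shows "ip (K x) (K x) = ip (K x) x"
proof -
  have "ip (K x) (K x) = ip x (K (K x))" and "K (K x) = K x" and "ip (K x) x = ip x (K x)"
    using assms unfolding module_projection_def by blast+
  then show ?thesis
    by simp
qed

lemma projection_defect_eq:
  assumes "module_projection ip K" and "u + v \<in> range K"
  shows "(1/4) *\<^sub>R ip (v - u) (v - u) - cstar_Re star (ip (x - u) (v - x)) - (ip x x - ip (K x) x)
       = (1/4) *\<^sub>R ip (K x + K x - (u + v)) (K x + K x - (u + v))"
proof -
  have "ip (K x) (u + v) = ip x (u + v)"
    by (rule ip_projection_range[OF assms])
  then have Kx_v: "ip (K x) v = ip x u + ip x v - ip (K x) u"
    by (simp add: ip_add_right algebra_simps)
  then have v_Kx: "ip v (K x) = ip u x + ip v x - ip u (K x)"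
    by (metis ip_swap star_add star_diff)
  have Kx_Kx: "ip (K x) (K x) = ip (K x) x"
    by (rule ip_projection_self[OF assms(1)])
  define B where "B = ip (x - u) (v - x)"
  have star_B: "star B = ip (v - x) (x - u)"
    unfolding B_def by (rule ip_swap[symmetric])
  have "ip (v - u) (v - u) - (B + star B) - (B + star B)
      - ((ip x x - ip (K x) x) + (ip x x - ip (K x) x) + (ip x x - ip (K x) x) + (ip x x - ip (K x) x))
      = ip (K x + K x - (u + v)) (K x + K x - (u + v))"
    unfolding star_B unfolding B_def
    by (simp add: ip_add_left ip_add_right ip_diff_left ip_diff_right Kx_v v_Kx Kx_Kx algebra_simps)
  moreover have "4 *\<^sub>R ((1/4) *\<^sub>R ip (v - u) (v - u) - cstar_Re star B - (ip x x - ip (K x) x))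
      = ip (v - u) (v - u) - 2 *\<^sub>R (B + star B) - 4 *\<^sub>R (ip x x - ip (K x) x)"
    by (simp add: cstar_Re_def scaleR_diff_right)
  ultimately have "ip (K x + K x - (u + v)) (K x + K x - (u + v))
      = 4 *\<^sub>R ((1/4) *\<^sub>R ip (v - u) (v - u) - cstar_Re star B - (ip x x - ip (K x) x))"
    by (simp only: scaleR_four scaleR_2 diff_diff_eq)
  then show ?thesis
    unfolding B_def by simp
qed

end

theorem lemma4p1:
  fixes sc :: "complex \<Rightarrow> 'a::{real_normed_algebra,banach} \<Rightarrow> 'a"
    and star :: "'a \<Rightarrow> 'a"
    and scX :: "complex \<Rightarrow> 'x::ab_group_add \<Rightarrow> 'x"
    and act :: "'x \<Rightarrow> 'a \<Rightarrow> 'x"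
    and ip :: "'x \<Rightarrow> 'x \<Rightarrow> 'a"
    and K :: "'x \<Rightarrow> 'x"
    and x u v :: 'x
  assumes "hilbert_cstar_module sc star scX act ip"
    and "module_projection ip K"
    and "u + v \<in> range K"
  shows "semi_inner ip (\<lambda>z. z - K z) x x = ip x x - ip (K x) x
       \<and> cstar_le star (ip x x - ip (K x) x)
           (scaleR (1/4) (ip (v - u) (v - u)) - cstar_Re star (ip (x - u) (v - x)))
       \<and> (cstar_le star 0 (cstar_Re star (ip (x - u) (v - x))) \<longrightarrow>
           cstar_le star (ip x x - ip (K x) x) (scaleR (1/4) (ip (v - u) (v - u))))"
proof -
  interpret hilbert_module sc star scX act ip
    by (rule hilbert_module.intro) (fact assms(1))
  define y where "y = K x + K x - (u + v)"
  have "cstar_pos star ((1/4) *\<^sub>R ip y y)"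
    using cstar_pos_ip_self[of y] by (simp add: cstar_pos_iff_positive positive_scaleR)
  then have le: "cstar_le star (ip x x - ip (K x) x)
      ((1/4) *\<^sub>R ip (v - u) (v - u) - cstar_Re star (ip (x - u) (v - x)))"
    using projection_defect_eq[OF assms(2,3), of x] unfolding cstar_le_def y_def by simp
  moreover have "cstar_le star (ip x x - ip (K x) x) ((1/4) *\<^sub>R ip (v - u) (v - u))"
    if "cstar_le star 0 (cstar_Re star (ip (x - u) (v - x)))"
    using cstar_pos_add[OF le[unfolded cstar_le_def] that[unfolded cstar_le_def]]
    unfolding cstar_le_def by (simp add: algebra_simps)
  ultimately show ?thesis
    unfolding semi_inner_def by (simp add: ip_diff_left)
qed

end
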